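(* Let $S$, $\psi_1,\psi_2,\psi_3$, $\beta$ and $\tau$ be as in the context. Let $n\ge 1$ and $j_0,\dots,j_{n-1}\in\{1,2,3\}$, and write $\psi_{j_0\dots j_{n-1}}=\psi_{j_0}\circ\cdots\circ\psi_{j_{n-1}}$, an invertible affine map of $\mathbb R^2$ with constant derivative $D\psi_{j_0\dots j_{n-1}}$. Then the push-forward of $\tau$ satisfies $$(\psi_{j_0\dots j_{n-1}})_\sharp\tau=\beta^n\,(D\psi_{j_0\dots j_{n-1}})^{-1}\cdot\tau|_{\psi_{j_0\dots j_{n-1}}(S)}\cdot{}^t(D\psi_{j_0\dots j_{n-1}})^{-1},$$ where $\tau|_{\psi_{j_0\dots j_{n-1}}(S)}$ is the restriction of $\tau$ to the set $\psi_{j_0\dots j_{n-1}}(S)$ and ${}^tA$ denotes the transpose of $A$.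
   Context: Let $T_1=\begin{pmatrix}3/5&0\\0&1/5\end{pmatrix}$, $T_2=\begin{pmatrix}3/10&\sqrt3/10\\ \sqrt3/10&1/2\end{pmatrix}$, $T_3=\begin{pmatrix}3/10&-\sqrt3/10\\ -\sqrt3/10&1/2\end{pmatrix}$, $\bar A=(0,0)$, $\bar B=(1,1/\sqrt3)$, $\bar C=(1,-1/\sqrt3)$, and $\psi_1(x)=\bar A+T_1(x-\bar A)$, $\psi_2(x)=\bar B+T_2(x-\bar B)$, $\psi_3(x)=\bar C+T_3(x-\bar C)$. The harmonic Sierpinski gasket $S\subset\mathbb R^2$ is the unique nonempty compact set with $S=\bigcup_{i=1}^3\psi_i(S)$. For $w=(w_0w_1\dots)\in\Sigma=\{1,2,3\}^{\mathbb N}$ write $\psi_{w_0\dots w_l}=\psi_{w_0}\circ\cdots\circ\psi_{w_l}$ and call $[w_0\dots w_l]=\psi_{w_0\dots w_l}(S)$ a cell; cells generate the Borel $\sigma$-algebra of $S$. Let $M^2$ be the space of real symmetric $2\times2$ matrices with the Hilbert–Schmidt inner product $(A,B)_{HS}=\mathrm{tr}(AB)$. Let $\mathcal L$ act on continuous fields $A\in C(S,M^2)$ by $(\mathcal LA)(x)=\sum_{i=1}^3{}^tD\psi_i\,A_{\psi_i(x)}\,D\psi_i$. It is known that $\mathcal L$ has a simple positive eigenvalue $\beta>0$ whose eigenspace is spanned by the constant field $Id$, and that there is a unique $M^2$-valued Borel measure $\tau$ on $S$ which is semipositive definite ($\tau(E)$ is positive semidefinite for every Borel $E$), normalized by $\mathrm{tr}\,\tau(S)=1$,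 and satisfies $\mathcal L^*\tau=\beta\tau$ (i.e. $\int_S(\mathcal LA,d\tau)_{HS}=\beta\int_S(A,d\tau)_{HS}$ for all $A\in C(S,M^2)$). Moreover $\tau(S)$ is a positive multiple of the identity and $\tau$ has the Gibbs property $\tau([x_0\dots x_{l-1}])=\beta^{-l}\,D\psi_{x_0\dots x_{l-1}}\,\tau(S)\,{}^tD\psi_{x_0\dots x_{l-1}}$ for every word $x_0\dots x_{l-1}$. *)

theory Defs
  imports "HOL-Analysis.Analysis"
begin

type_synonym pt = "real^2"
type_synonym mat2 = "real^2^2"

definition Tm :: "nat \<Rightarrow> mat2" where
  "Tm i = (if i = 1 then vector [vector [3/5, 0], vector [0, 1/5]]
           else if i = 2 then vector [vector [3/10, sqrt 3/10], vector [sqrt 3/10, 1/2]]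
           else vector [vector [3/10, - sqrt 3/10], vector [- sqrt 3/10, 1/2]])"

definition vtx :: "nat \<Rightarrow> pt" where
  "vtx i = (if i = 1 then vector [0, 0]
            else if i = 2 then vector [1, 1 / sqrt 3]
            else vector [1, - 1 / sqrt 3])"

definition psi :: "nat \<Rightarrow> pt \<Rightarrow> pt" where
  "psi i x = vtx i + Tm i *v (x - vtx i)"

definition psiw :: "nat list \<Rightarrow> pt \<Rightarrow> pt" where
  "psiw js = foldr (\<lambda>i f. psi i \<circ> f) js id"

definition Dpsiw :: "nat list \<Rightarrow> mat2" where
  "Dpsiw js = foldr (\<lambda>i M. Tm i ** M) js (mat 1)"

definition Lop :: "(pt \<Rightarrow> mat2) \<Rightarrow> pt \<Rightarrow> mat2" where
  "Lop A x = (\<Sum>i\<in>{1,2,3::nat}. transpose (Tm i) ** A (psi i x) ** Tm i)"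

definition symmetric_mat :: "mat2 \<Rightarrow> bool" where
  "symmetric_mat M \<longleftrightarrow> transpose M = M"

abbreviation borelS :: "pt set \<Rightarrow> pt set set" where
  "borelS S \<equiv> sets (restrict_space borel S)"

definition matrix_measure :: "pt set \<Rightarrow> (pt set \<Rightarrow> mat2) \<Rightarrow> bool" where
  "matrix_measure S \<tau> \<longleftrightarrow>
     (\<forall>E\<in>borelS S. symmetric_mat (\<tau> E)) \<and>
     (\<forall>A::nat \<Rightarrow> pt set. range A \<subseteq> borelS S \<longrightarrow> disjoint_family A \<longrightarrow>
        (\<lambda>n. \<tau> (A n)) sums \<tau> (\<Union>n. A n))"

definition semipos_measure :: "pt set \<Rightarrow> (pt set \<Rightarrow> mat2) \<Rightarrow> bool" where
  "semipos_measure S \<tau> \<longleftrightarrow> (\<forall>E\<in>borelS S. \<forall>v. 0 \<le> v \<bullet> (\<tau> E *v v))"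

definition qmeas :: "pt set \<Rightarrow> (pt set \<Rightarrow> mat2) \<Rightarrow> pt \<Rightarrow> pt measure" where
  "qmeas S \<tau> v = measure_of S (borelS S) (\<lambda>E. ennreal (v \<bullet> (\<tau> E *v v)))"

text \<open>Integral of (A, d tau)_HS = sum_{k,l} int A_kl d tau_lk, where the signed entry
  measures tau_lk are obtained by polarization:
  tau_lk = 1/4 (q_{e_l+e_k} - q_{e_l-e_k}), q_v(E) = v . tau(E) v.\<close>
definition HSint :: "pt set \<Rightarrow> (pt set \<Rightarrow> mat2) \<Rightarrow> (pt \<Rightarrow> mat2) \<Rightarrow> real" where
  "HSint S \<tau> A = (\<Sum>k\<in>UNIV. \<Sum>l\<in>UNIV.
      (1/4) * ((\<integral>x. A x $ k $ l \<partial>(qmeas S \<tau> (axis l 1 + axis k 1)))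
             - (\<integral>x. A x $ k $ l \<partial>(qmeas S \<tau> (axis l 1 - axis k 1)))))"

end

(* Write D for the derivative of psi_w, w = j0...j(n-1). The set functions
     F |-> tau (psi_w F)   and   F |-> beta^-n * D tau(F) D^T
   are semipositive matrix-valued measures on the Borel subsets of S, and the Gibbs property
   makes them agree on every cell psi_u(S). Together with tau(S) = c Id and
   sum_i T_i^2 = beta Id (the eigen-equation L Id = beta Id) it also shows that the cell masses
   of each level add up to tau(S), so distinct cells of one level meet in a null set. Off this
   null set cells are nested or disjoint, and as they shrink by the factor 3/5 they generate the
   Borel sets of S. Hence the scalar measures F |-> v . sigma(F) v of the two sides sigma
   coincide for every v, and polarisation identifies the matrices. The theorem is the case F = psi_w^-1 E inter S,
   solved for tau(F). *)

theory Submission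
  imports Defs "HOL-Library.Sublist"
begin

section \<open>Matrix algebra\<close>

lemma matrix_inv_right: "invertible A \<Longrightarrow> A ** matrix_inv A = mat 1"
  and matrix_inv_left: "invertible A \<Longrightarrow> matrix_inv A ** A = mat 1"
  unfolding invertible_def matrix_inv_def by (metis (mono_tags, lifting) someI_ex)+

lemma linear_sandwich: "linear (\<lambda>M::real^'n^'m. A ** M ** B)"
  by (rule linearI)
    (auto simp: matrix_matrix_mult_def vec_eq_iff sum.distrib algebra_simps sum_distrib_left)

lemma linear_quadratic_form: "linear (\<lambda>M::real^'n^'n. v \<bullet> (M *v v))"
  by (rule linearI)
    (simp_all add: matrix_vector_mult_add_rdistrib inner_add_right
      scaleR_matrix_vector_assoc[symmetric])

lemma symmetric_matrix_eqI:
  fixes A B :: "real^'n^'n"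
  assumes "transpose A = A" and "transpose B = B"
    and quadratic_eq: "\<And>v. v \<bullet> (A *v v) = v \<bullet> (B *v v)"
  shows "A = B"
proof -
  define C where "C = A - B"
  have C_quadratic: "v \<bullet> (C *v v) = 0" for v
    using quadratic_eq[of v] by (simp add: C_def matrix_vector_mult_diff_rdistrib inner_diff_right)
  have "transpose C = C"
    using assms(1,2) by (simp add: C_def transpose_def vec_eq_iff)
  then have C_symmetric: "x \<bullet> (C *v y) = y \<bullet> (C *v x)" for x y
    by (metis dot_lmul_matrix inner_commute transpose_matrix_vector)
  have "x \<bullet> (C *v y) = 0" for x y
    using C_quadratic[of "x + y"] C_quadratic[of x] C_quadratic[of y] C_symmetric[of x y]
    by (simp add: matrix_vector_right_distrib inner_add_left inner_add_right)
  then have "C *v y = 0" for y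
    using inner_eq_zero_iff by blast
  then show ?thesis
    unfolding C_def by (simp add: matrix_eq matrix_vector_mult_diff_rdistrib)
qed

lemma sandwich_solve:
  fixes D :: "real^'n^'n"
  assumes "invertible D" and "k \<noteq> 0" and "Y = k *\<^sub>R (D ** X ** transpose D)"
  shows "X = (1 / k) *\<^sub>R (matrix_inv D ** Y ** transpose (matrix_inv D))"
proof -
  have transpose_inv: "transpose D ** transpose (matrix_inv D) = mat 1"
    using matrix_inv_left[OF assms(1)] by (metis matrix_transpose_mul transpose_mat)
  have "matrix_inv D ** Y ** transpose (matrix_inv D)
      = k *\<^sub>R ((matrix_inv D ** D) ** X ** (transpose D ** transpose (matrix_inv D)))"
    unfolding assms(3) by (simp add: matrix_scalar_ac scalar_matrix_assoc matrix_mul_assoc)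
  also have "\<dots> = k *\<^sub>R X"
    by (simp only: matrix_inv_left[OF assms(1)] transpose_inv matrix_mul_lid matrix_mul_rid)
  finally show ?thesis
    using assms(2) by simp
qed

section \<open>The affine maps of words\<close>

lemma Tm_symmetric: "transpose (Tm i) = Tm i"
  unfolding Tm_def transpose_def by (auto simp: vec_eq_iff forall_2 vector_2)

lemma invertible_Tm: "invertible (Tm i)"
  unfolding invertible_det_nz Tm_def by (auto simp: det_2 vector_2)

lemma norm_Tm_le: "norm (Tm i *v z) \<le> 3/5 * norm z"
proof -
  define a b where "a = z$1" and "b = z$2"
  have norm2: "norm x ^ 2 = (x$1)^2 + (x$2)^2" for x :: "real^2"
    unfolding power2_norm_eq_inner inner_vec_def by (simp add: sum_2 power2_eq_square)
  have "\<exists>t \<in> {2 * b, sqrt 3 * a - b, sqrt 3 * a + b}.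
          9/25 * (a^2 + b^2) - ((Tm i *v z)$1^2 + (Tm i *v z)$2^2) = 2/25 * t^2"
    unfolding Tm_def a_def b_def
    by (auto simp: matrix_vector_mult_def sum_2 power2_eq_square algebra_simps)
  then have "(Tm i *v z)$1^2 + (Tm i *v z)$2^2 \<le> 9/25 * (a^2 + b^2)"
    by (metis diff_ge_0_iff_ge mult_nonneg_nonneg zero_le_divide_iff zero_le_numeral zero_le_power2)
  then have "norm (Tm i *v z) ^ 2 \<le> (3/5 * norm z) ^ 2"
    unfolding power_mult_distrib norm2 a_def b_def by (simp add: power2_eq_square)
  then show ?thesis by (rule power2_le_imp_le) simp
qed

lemma psiw_Nil [simp]: "psiw [] = id"
  by (simp add: psiw_def)

lemma psiw_Cons [simp]: "psiw (i # u) = psi i \<circ> psiw u"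
  by (simp add: psiw_def)

lemma Dpsiw_Nil [simp]: "Dpsiw [] = mat 1"
  by (simp add: Dpsiw_def)

lemma Dpsiw_Cons [simp]: "Dpsiw (i # u) = Tm i ** Dpsiw u"
  by (simp add: Dpsiw_def)

lemma psiw_append: "psiw (u @ w) = psiw u \<circ> psiw w"
  by (induction u) auto

lemma Dpsiw_append: "Dpsiw (u @ w) = Dpsiw u ** Dpsiw w"
  by (induction u) (auto simp: matrix_mul_assoc)

lemma psiw_diff: "psiw u x - psiw u y = Dpsiw u *v (x - y)"
proof (induction u arbitrary: x y)
  case (Cons i u)
  have "psiw (i # u) x - psiw (i # u) y = Tm i *v (psiw u x - psiw u y)"
    by (simp add: psi_def matrix_vector_mult_diff_distrib)
  then show ?case
    by (simp add: Cons.IH matrix_vector_mul_assoc)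
qed simp

lemma psiw_affine: "psiw u x = psiw u 0 + Dpsiw u *v x"
  using psiw_diff[of u x 0] by (simp add: algebra_simps)

lemma invertible_Dpsiw: "invertible (Dpsiw u)"
proof (induction u)
  case Nil
  show ?case
    unfolding invertible_def by auto
qed (auto simp: invertible_Tm invertible_mult)

lemma norm_Dpsiw_le: "norm (Dpsiw u *v z) \<le> (3/5) ^ length u * norm z"
proof (induction u arbitrary: z)
  case (Cons i u)
  have "norm (Dpsiw (i # u) *v z) = norm (Tm i *v (Dpsiw u *v z))"
    by (simp add: matrix_vector_mul_assoc)
  also have "\<dots> \<le> 3/5 * norm (Dpsiw u *v z)"
    by (rule norm_Tm_le)
  also have "\<dots> \<le> 3/5 * ((3/5) ^ length u * norm z)"
    using Cons.IH by simp
  finally show ?case by simp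
qed simp

definition psiw_inv :: "nat list \<Rightarrow> pt \<Rightarrow> pt" where
  "psiw_inv u y = matrix_inv (Dpsiw u) *v (y - psiw u 0)"

lemma psiw_inv_psiw [simp]: "psiw_inv u (psiw u x) = x"
  unfolding psiw_inv_def
  by (subst psiw_affine) (simp add: matrix_vector_mul_assoc matrix_inv_left invertible_Dpsiw)

lemma psiw_psiw_inv [simp]: "psiw u (psiw_inv u y) = y"
  unfolding psiw_inv_def
  by (subst psiw_affine) (simp add: matrix_vector_mul_assoc matrix_inv_right invertible_Dpsiw)

lemma inj_psiw: "inj (psiw u)"
  by (metis injI psiw_inv_psiw)

lemma image_psiw_eq_vimage: "psiw u ` B = psiw_inv u -` B"
  by (auto simp: image_iff) (metis psiw_psiw_inv)

lemma continuous_on_psiw: "continuous_on A (psiw u)"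
  by (subst psiw_affine[abs_def]) (intro continuous_intros)

lemma psiw_inv_measurable: "psiw_inv u \<in> borel_measurable borel"
  unfolding psiw_inv_def
  by (intro borel_measurable_continuous_onI continuous_intros
      bounded_linear.continuous_on[OF matrix_vector_mul_bounded_linear])

definition words :: "nat \<Rightarrow> nat list set" where
  "words l = {u. set u \<subseteq> {1,2,3} \<and> length u = l}"

lemma finite_words: "finite (words l)"
  unfolding words_def by (rule finite_lists_length_eq) simp

lemma words_0 [simp]: "words 0 = {[]}"
  unfolding words_def by auto

lemma words_Suc: "words (Suc l) = (\<lambda>(i, u). i # u) ` ({1,2,3} \<times> words l)"
  unfolding words_def by (auto simp: length_Suc_conv image_iff)

lemma sum_words_Suc: "(\<Sum>u\<in>words (Suc l). f u) = (\<Sum>i\<in>{1,2,3}. \<Sum>u\<in>words l. f (i # u))"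
proof -
  have "inj_on (\<lambda>(i, u). i # u) ({1,2,3::nat} \<times> words l)"
    by (auto simp: inj_on_def)
  then show ?thesis
    unfolding words_Suc by (simp add: sum.reindex sum.cartesian_product prod.case_distrib)
qed

lemma sum_words_Dpsiw_transpose:
  assumes "(\<Sum>i\<in>{1,2,3}. Tm i ** Tm i) = \<beta> *\<^sub>R mat 1"
  shows "(\<Sum>u\<in>words l. Dpsiw u ** transpose (Dpsiw u)) = \<beta> ^ l *\<^sub>R mat 1"
proof (induction l)
  case (Suc l)
  have "(\<Sum>u\<in>words (Suc l). Dpsiw u ** transpose (Dpsiw u))
      = (\<Sum>i\<in>{1,2,3}. Tm i ** (\<Sum>u\<in>words l. Dpsiw u ** transpose (Dpsiw u)) ** Tm i)"
    unfolding sum_words_Suc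
    by (simp add: matrix_transpose_mul Tm_symmetric matrix_mul_assoc
        linear_sum[OF linear_sandwich])
  also have "\<dots> = \<beta> ^ l *\<^sub>R (\<Sum>i\<in>{1,2,3}. Tm i ** Tm i)"
    unfolding Suc.IH by (simp add: matrix_scalar_ac scalar_matrix_assoc scaleR_add_right)
  finally show ?case
    using assms by simp
qed simp

lemma sum_words_gibbs:
  assumes "(\<Sum>i\<in>{1,2,3}. Tm i ** Tm i) = \<beta> *\<^sub>R mat 1" and "\<beta> \<noteq> 0"
    and "\<tau> S = c *\<^sub>R mat 1"
    and gibbs: "\<forall>ws. set ws \<subseteq> {1,2,3} \<longrightarrow>
                  \<tau> (psiw ws ` S) =
                    (1 / \<beta>) ^ length ws *\<^sub>R (Dpsiw ws ** \<tau> S ** transpose (Dpsiw ws))"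
  shows "(\<Sum>u\<in>words l. \<tau> (psiw u ` S)) = \<tau> S"
proof -
  have "(\<Sum>u\<in>words l. \<tau> (psiw u ` S))
      = (\<Sum>u\<in>words l. ((1 / \<beta>) ^ l * c) *\<^sub>R (Dpsiw u ** transpose (Dpsiw u)))"
    using gibbs assms(3) unfolding words_def
    by (intro sum.cong) (auto simp: matrix_scalar_ac scalar_matrix_assoc)
  also have "\<dots> = ((1 / \<beta>) ^ l * c) *\<^sub>R (\<beta> ^ l *\<^sub>R mat 1)"
    by (simp add: scaleR_sum_right[symmetric] sum_words_Dpsiw_transpose[OF assms(1)])
  also have "\<dots> = \<tau> S"
    using assms(2,3) by (simp add: power_one_over field_simps)
  finally show ?thesis .
qed

section \<open>Semipositive matrix-valued measures\<close>

lemma sigma_algebra_borelS: "sigma_algebra S (borelS S)"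
  using sets.sigma_algebra_axioms[of "restrict_space borel S"] by (simp add: space_restrict_space)

lemma borelS_subset_Pow: "borelS S \<subseteq> Pow S"
  using sets.sets_into_space[of _ "restrict_space borel S"] by (auto simp: space_restrict_space)

lemma space_in_borelS: "S \<in> borelS S"
  unfolding sets_restrict_space by (auto intro!: image_eqI[of _ _ UNIV])

lemma matrix_measure_empty:
  assumes "matrix_measure S \<sigma>"
  shows "\<sigma> {} = 0"
proof -
  have "(\<lambda>n. \<sigma> ((\<lambda>_::nat. {}) n)) sums \<sigma> (\<Union>n. (\<lambda>_::nat. {}) n)"
    using assms unfolding matrix_measure_def by (auto simp: disjoint_family_on_def)
  then have "(\<lambda>n. \<sigma> {}) sums \<sigma> {}"
    by simp
  then show ?thesis
    using LIMSEQ_const_iff summable_LIMSEQ_zero sums_summable by blast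
qed

lemma sets_qmeas [simp]: "sets (qmeas S \<sigma> v) = borelS S"
  unfolding qmeas_def using sigma_algebra.sets_measure_of_eq[OF sigma_algebra_borelS] .

lemma space_qmeas [simp]: "space (qmeas S \<sigma> v) = S"
  by (simp add: qmeas_def space_measure_of_conv)

lemma emeasure_qmeas:
  assumes "matrix_measure S \<sigma>" and "semipos_measure S \<sigma>" and "F \<in> borelS S"
  shows "emeasure (qmeas S \<sigma> v) F = ennreal (v \<bullet> (\<sigma> F *v v))"
  unfolding qmeas_def
proof (rule emeasure_measure_of_sigma[OF sigma_algebra_borelS _ _ assms(3)])
  show "positive (borelS S) (\<lambda>E. ennreal (v \<bullet> (\<sigma> E *v v)))"
    unfolding positive_def using matrix_measure_empty[OF assms(1)] by simp
  show "countably_additive (borelS S) (\<lambda>E. ennreal (v \<bullet> (\<sigma> E *v v)))"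
    unfolding countably_additive_def
  proof (intro allI impI)
    fix A :: "nat \<Rightarrow> pt set"
    assume "range A \<subseteq> borelS S" and "disjoint_family A"
    then have "(\<lambda>n. \<sigma> (A n)) sums \<sigma> (\<Union>n. A n)"
      using assms(1) unfolding matrix_measure_def by blast
    then have sums: "(\<lambda>n. v \<bullet> (\<sigma> (A n) *v v)) sums (v \<bullet> (\<sigma> (\<Union>n. A n) *v v))"
      by (rule bounded_linear.sums
          [OF linear_conv_bounded_linear[THEN iffD1, OF linear_quadratic_form]])
    have nonneg: "0 \<le> v \<bullet> (\<sigma> (A n) *v v)" for n
      using assms(2) \<open>range A \<subseteq> borelS S\<close> unfolding semipos_measure_def by blast
    show "(\<Sum>n. ennreal (v \<bullet> (\<sigma> (A n) *v v))) = ennreal (v \<bullet> (\<sigma> (\<Union>n. A n) *v v))"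
      using suminf_ennreal2[OF nonneg sums_summable[OF sums]] sums_unique[OF sums] by simp
  qed
qed

lemma finite_measure_qmeas:
  assumes "matrix_measure S \<sigma>" and "semipos_measure S \<sigma>"
  shows "finite_measure (qmeas S \<sigma> v)"
  using emeasure_qmeas[OF assms space_in_borelS] by (intro finite_measureI) simp

lemma measure_qmeas:
  assumes "matrix_measure S \<sigma>" and "semipos_measure S \<sigma>" and "F \<in> borelS S"
  shows "measure (qmeas S \<sigma> v) F = v \<bullet> (\<sigma> F *v v)"
  using emeasure_qmeas[OF assms] assms(2,3) unfolding measure_def semipos_measure_def by simp

lemma matrix_measure_eqI:
  assumes "matrix_measure S \<sigma>1" and "semipos_measure S \<sigma>1"
    and "matrix_measure S \<sigma>2" and "semipos_measure S \<sigma>2"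
    and "\<And>v. qmeas S \<sigma>1 v = qmeas S \<sigma>2 v" and "F \<in> borelS S"
  shows "\<sigma>1 F = \<sigma>2 F"
proof (rule symmetric_matrix_eqI)
  show "transpose (\<sigma>1 F) = \<sigma>1 F" and "transpose (\<sigma>2 F) = \<sigma>2 F"
    using assms(1,3,6) unfolding matrix_measure_def symmetric_mat_def by blast+
  show "v \<bullet> (\<sigma>1 F *v v) = v \<bullet> (\<sigma>2 F *v v)" for v
    using measure_qmeas[OF assms(1,2,6), of v] measure_qmeas[OF assms(3,4,6), of v] assms(5) by simp
qed

lemma matrix_measure_sandwich:
  assumes "matrix_measure S \<tau>"
  shows "matrix_measure S (\<lambda>F. k *\<^sub>R (D ** \<tau> F ** transpose D))"
  unfolding matrix_measure_def
proof (intro conjI ballI allI impI)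
  fix E assume "E \<in> borelS S"
  then show "symmetric_mat (k *\<^sub>R (D ** \<tau> E ** transpose D))"
    using assms unfolding matrix_measure_def symmetric_mat_def
    by (simp add: transpose_scalar matrix_transpose_mul matrix_mul_assoc)
next
  fix A :: "nat \<Rightarrow> pt set" assume "range A \<subseteq> borelS S" and "disjoint_family A"
  then have "(\<lambda>n. \<tau> (A n)) sums \<tau> (\<Union>n. A n)"
    using assms unfolding matrix_measure_def by blast
  then show "(\<lambda>n. k *\<^sub>R (D ** \<tau> (A n) ** transpose D)) sums (k *\<^sub>R (D ** \<tau> (\<Union>n. A n) ** transpose D))"
    by (intro bounded_linear.sums[OF bounded_linear_scaleR_right]
        bounded_linear.sums[OF linear_conv_bounded_linear[THEN iffD1, OF linear_sandwich]])
qed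

lemma semipos_measure_sandwich:
  assumes "semipos_measure S \<tau>" and "0 \<le> k"
  shows "semipos_measure S (\<lambda>F. k *\<^sub>R (D ** \<tau> F ** transpose D))"
  unfolding semipos_measure_def
proof (intro ballI allI)
  fix E v assume "E \<in> borelS S"
  then have "0 \<le> k * ((transpose D *v v) \<bullet> (\<tau> E *v (transpose D *v v)))"
    using assms unfolding semipos_measure_def by simp
  also have "\<dots> = v \<bullet> ((k *\<^sub>R (D ** \<tau> E ** transpose D)) *v v)"
    by (simp add: dot_lmul_matrix scaleR_matrix_vector_assoc[symmetric]
        matrix_vector_mul_assoc[symmetric])
  finally show "0 \<le> v \<bullet> ((k *\<^sub>R (D ** \<tau> E ** transpose D)) *v v)" .
qed

lemma matrix_measure_image:
  assumes "matrix_measure S \<tau>" and "inj f" and "\<And>F. F \<in> borelS S \<Longrightarrow> f ` F \<in> borelS S"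
  shows "matrix_measure S (\<lambda>F. \<tau> (f ` F))"
  unfolding matrix_measure_def
proof (intro conjI ballI allI impI)
  fix E assume "E \<in> borelS S"
  then show "symmetric_mat (\<tau> (f ` E))"
    using assms unfolding matrix_measure_def by blast
next
  fix A :: "nat \<Rightarrow> pt set" assume "range A \<subseteq> borelS S" and "disjoint_family A"
  then have "range (\<lambda>n. f ` A n) \<subseteq> borelS S" and "disjoint_family (\<lambda>n. f ` A n)"
    using assms(2,3) by (auto simp: disjoint_family_on_def image_Int[symmetric])
  then have "(\<lambda>n. \<tau> (f ` A n)) sums \<tau> (\<Union>n. f ` A n)"
    using assms(1) unfolding matrix_measure_def by blast
  then show "(\<lambda>n. \<tau> (f ` A n)) sums \<tau> (f ` (\<Union>n. A n))"
    by (simp add: image_UN)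
qed

lemma semipos_measure_image:
  assumes "semipos_measure S \<tau>" and "\<And>F. F \<in> borelS S \<Longrightarrow> f ` F \<in> borelS S"
  shows "semipos_measure S (\<lambda>F. \<tau> (f ` F))"
  using assms unfolding semipos_measure_def by blast

section \<open>Cells of the attractor\<close>

lemma (in finite_measure) Int_null_if_sum_measure_le:
  assumes "finite I" and C: "C ` I \<subseteq> sets M"
    and sum_le: "(\<Sum>k\<in>I. measure M (C k)) \<le> measure M (\<Union>k\<in>I. C k)"
    and "i \<in> I" and "j \<in> I" and "i \<noteq> j"
  shows "C i \<inter> C j \<in> null_sets M"
proof -
  define D where "D = C(j := C j - C i)"
  have "C i \<inter> C j \<in> sets M" and D: "D ` I \<subseteq> sets M"
    using C \<open>i \<in> I\<close> \<open>j \<in> I\<close> by (auto simp: D_def)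
  have "(\<Union>k\<in>I. C k) = (\<Union>k\<in>I. D k)"
    using \<open>i \<in> I\<close> \<open>i \<noteq> j\<close> by (auto simp: D_def split: if_splits)
  also have "measure M \<dots> \<le> (\<Sum>k\<in>I. measure M (D k))"
    using \<open>finite I\<close> D by (rule finite_measure_subadditive_finite)
  also have "\<dots> = measure M (C j - C i) + (\<Sum>k\<in>I - {j}. measure M (C k))"
    using \<open>finite I\<close> \<open>j \<in> I\<close> by (simp add: sum.remove D_def)
  also have "\<dots> = (\<Sum>k\<in>I. measure M (C k)) - measure M (C i \<inter> C j)"
    using \<open>finite I\<close> \<open>j \<in> I\<close> C \<open>i \<in> I\<close>
    by (simp add: sum.remove finite_measure_Diff' Int_commute)
  finally have "measure M (C i \<inter> C j) = 0"
    using sum_le measure_nonneg[of M "C i \<inter> C j"] by linarith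
  with \<open>C i \<inter> C j \<in> sets M\<close> show ?thesis
    by (simp add: emeasure_eq_measure null_setsI)
qed

locale psi_attractor =
  fixes S :: "pt set"
  assumes compact_S: "compact S"
    and self_similar: "S = (\<Union>i\<in>{1,2,3}. psi i ` S)"
begin

lemma cell_subset: "set u \<subseteq> {1,2,3} \<Longrightarrow> psiw u ` S \<subseteq> S"
proof (induction u)
  case (Cons i u)
  then have "psi i ` psiw u ` S \<subseteq> psi i ` S" and "psi i ` S \<subseteq> S"
    using self_similar by auto
  then show ?case
    by (simp add: image_comp)
qed simp

lemma Union_cells_words: "(\<Union>u\<in>words l. psiw u ` S) = S"
proof
  show "(\<Union>u\<in>words l. psiw u ` S) \<subseteq> S"
    using cell_subset by (auto simp: words_def)
  show "S \<subseteq> (\<Union>u\<in>words l. psiw u ` S)"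
  proof (induction l)
    case (Suc l)
    show ?case
    proof
      fix x assume "x \<in> S"
      then obtain i y where "i \<in> {1,2,3}" "y \<in> S" "x = psi i y"
        using self_similar by blast
      moreover obtain u where "u \<in> words l" "y \<in> psiw u ` S"
        using Suc.IH \<open>y \<in> S\<close> by blast
      ultimately have "i # u \<in> words (Suc l)" and "x \<in> psiw (i # u) ` S"
        by (auto simp: words_def)
      then show "x \<in> (\<Union>u\<in>words (Suc l). psiw u ` S)"
        by blast
    qed
  qed simp
qed

lemma image_in_borelS:
  assumes "set u \<subseteq> {1,2,3}" and "F \<in> borelS S"
  shows "psiw u ` F \<in> borelS S"
proof -
  have "S \<in> sets borel"
    using compact_S by (simp add: borel_closed compact_imp_closed)
  then have "F \<in> sets borel" and "F \<subseteq> S"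
    using assms(2) by (auto simp: sets_restrict_space_iff)
  have "psiw u ` F \<in> sets borel"
    unfolding image_psiw_eq_vimage
    by (rule measurable_sets_borel[OF psiw_inv_measurable \<open>F \<in> sets borel\<close>])
  moreover have "psiw u ` F \<subseteq> S"
    using \<open>F \<subseteq> S\<close> cell_subset[OF assms(1)] by blast
  ultimately show ?thesis
    using \<open>S \<in> sets borel\<close> by (simp add: sets_restrict_space_iff)
qed

lemma cell_in_borelS: "set u \<subseteq> {1,2,3} \<Longrightarrow> psiw u ` S \<in> borelS S"
  using image_in_borelS space_in_borelS by blast

lemma small_cell_exists:
  assumes "x \<in> S" and "0 < e"
  obtains u where "set u \<subseteq> {1,2,3}" and "x \<in> psiw u ` S" and "psiw u ` S \<subseteq> ball x e"
proof -
  have "bounded S"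
    using compact_S by (rule compact_imp_bounded)
  have "(\<lambda>l. (3/5) ^ l * diameter S) \<longlonglongrightarrow> 0"
    by (intro tendsto_mult_left_zero LIMSEQ_power_zero) simp
  then have "eventually (\<lambda>l. (3/5) ^ l * diameter S < e) sequentially"
    using \<open>0 < e\<close> by (rule order_tendstoD(2))
  then obtain l where l: "(3/5) ^ l * diameter S < e"
    by (auto simp: eventually_sequentially)
  obtain u where u: "u \<in> words l" "x \<in> psiw u ` S"
    using Union_cells_words \<open>x \<in> S\<close> by blast
  then obtain y where y: "y \<in> S" "x = psiw u y"
    by blast
  have "dist x (psiw u z) < e" if "z \<in> S" for z
  proof -
    have "dist x (psiw u z) = norm (Dpsiw u *v (y - z))"
      using y psiw_diff[of u y z] by (simp add: dist_norm)
    also have "\<dots> \<le> (3/5) ^ l * norm (y - z)"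
      using norm_Dpsiw_le[of u "y - z"] u(1) by (simp add: words_def)
    also have "\<dots> \<le> (3/5) ^ l * diameter S"
      using diameter_bounded_bound[OF \<open>bounded S\<close> y(1) that] by (simp add: dist_norm)
    finally show ?thesis
      using l by simp
  qed
  then have "psiw u ` S \<subseteq> ball x e"
    by auto
  with u show ?thesis
    by (intro that[of u]) (auto simp: words_def)
qed

lemma Int_open_eq_Union_cells:
  assumes "open U"
  shows "S \<inter> U = (\<Union>u\<in>{u. set u \<subseteq> {1,2,3} \<and> psiw u ` S \<subseteq> U}. psiw u ` S)"
proof
  show "S \<inter> U \<subseteq> (\<Union>u\<in>{u. set u \<subseteq> {1,2,3} \<and> psiw u ` S \<subseteq> U}. psiw u ` S)"
  proof
    fix x assume "x \<in> S \<inter> U"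
    then obtain e where "0 < e" "ball x e \<subseteq> U"
      using \<open>open U\<close> open_contains_ball by blast
    moreover obtain u where "set u \<subseteq> {1,2,3}" "x \<in> psiw u ` S" "psiw u ` S \<subseteq> ball x e"
      using small_cell_exists \<open>x \<in> S \<inter> U\<close> \<open>0 < e\<close> by blast
    ultimately show "x \<in> (\<Union>u\<in>{u. set u \<subseteq> {1,2,3} \<and> psiw u ` S \<subseteq> U}. psiw u ` S)"
      by blast
  qed
qed (use cell_subset in blast)

lemma sigma_sets_cells: "sigma_sets S {psiw u ` S | u. set u \<subseteq> {1,2,3}} = borelS S"
proof
  let ?C = "{psiw u ` S | u. set u \<subseteq> {1,2,3}}"
  show "sigma_sets S ?C \<subseteq> borelS S"
    using cell_in_borelS by (intro sigma_algebra.sigma_sets_subset[OF sigma_algebra_borelS]) auto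
  have "?C \<subseteq> Pow S"
    using cell_subset by auto
  then interpret cells: sigma_algebra S "sigma_sets S ?C"
    by (rule sigma_algebra_sigma_sets)
  have "S \<inter> U \<in> sigma_sets S ?C" if "open U" for U
    unfolding Int_open_eq_Union_cells[OF that] by (intro cells.countable_UN) auto
  then have open_Int: "(\<inter>) S ` {U. open U} \<subseteq> sigma_sets S ?C"
    by auto
  have "S \<in> sigma_sets UNIV {U. open U}"
    using compact_S sets_borel by (metis borel_closed compact_imp_closed)
  then have "(\<inter>) S ` sigma_sets UNIV {U. open U} = sigma_sets S ((\<inter>) S ` {U. open U})"
    by (rule sigma_sets_Int) simp
  also have "\<dots> \<subseteq> sigma_sets S (sigma_sets S ?C)"
    using open_Int by (rule sigma_sets_mono')
  also have "\<dots> = sigma_sets S ?C"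
    by (rule cells.sigma_sets_eq)
  finally show "borelS S \<subseteq> sigma_sets S ?C"
    by (simp add: sets_restrict_space sets_borel)
qed

lemma cell_append_subset:
  assumes "set r \<subseteq> {1,2,3}"
  shows "psiw (u @ r) ` S \<subseteq> psiw u ` S"
proof -
  have "psiw (u @ r) ` S = psiw u ` psiw r ` S"
    by (simp add: psiw_append image_comp)
  then show ?thesis
    using image_mono[OF cell_subset[OF assms]] by simp
qed

definition overlaps :: "pt set" where
  "overlaps = (\<Union>(p, i, j) \<in> {(p, i, j). set p \<subseteq> {1,2,3} \<and> i \<in> {1,2,3} \<and> j \<in> {1,2,3} \<and> i \<noteq> j}.
      psiw (p @ [i]) ` S \<inter> psiw (p @ [j]) ` S)"

lemma overlap_subset_overlaps:
  assumes "set p \<subseteq> {1,2,3}" and "i \<in> {1,2,3}" and "j \<in> {1,2,3}" and "i \<noteq> j"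
  shows "psiw (p @ [i]) ` S \<inter> psiw (p @ [j]) ` S \<subseteq> overlaps"
  unfolding overlaps_def
  by (rule subset_trans[OF _ UN_upper[of "(p, i, j)"]]) (use assms in auto)

lemma overlaps_in_borelS: "overlaps \<in> borelS S"
  unfolding overlaps_def using cell_in_borelS by (intro sets.countable_UN) auto

lemma cells_nested_or_overlap:
  assumes "set u \<subseteq> {1,2,3}" and "set u' \<subseteq> {1,2,3}"
  shows "psiw u ` S \<subseteq> psiw u' ` S \<or> psiw u' ` S \<subseteq> psiw u ` S
    \<or> psiw u ` S \<inter> psiw u' ` S \<subseteq> overlaps"
proof -
  consider "prefix u' u" | "prefix u u'" | "u \<parallel> u'"
    unfolding parallel_def by blast
  then show ?thesis
  proof cases
    case 1
    then obtain r where "u = u' @ r"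
      by (auto simp: prefix_def)
    then show ?thesis
      using assms(1) cell_append_subset[of r u'] by simp
  next
    case 2
    then obtain r where "u' = u @ r"
      by (auto simp: prefix_def)
    then show ?thesis
      using assms(2) cell_append_subset[of r u] by simp
  next
    case 3
    then obtain p i r j r' where "i \<noteq> j" "u = p @ i # r" "u' = p @ j # r'"
      using parallel_decomp by blast
    then have "psiw u ` S \<subseteq> psiw (p @ [i]) ` S" and "psiw u' ` S \<subseteq> psiw (p @ [j]) ` S"
      using assms cell_append_subset[of r "p @ [i]"] cell_append_subset[of r' "p @ [j]"] by auto
    moreover have "psiw (p @ [i]) ` S \<inter> psiw (p @ [j]) ` S \<subseteq> overlaps"
      using \<open>i \<noteq> j\<close> \<open>u = p @ i # r\<close> \<open>u' = p @ j # r'\<close> assms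
      by (intro overlap_subset_overlaps) auto
    ultimately show ?thesis
      by blast
  qed
qed

lemma overlaps_null:
  assumes "finite_measure M" and "sets M = borelS S"
    and additive: "\<And>l. (\<Sum>u\<in>words l. measure M (psiw u ` S)) = measure M S"
  shows "overlaps \<in> null_sets M"
  unfolding overlaps_def
proof (rule null_sets_UN', simp, clarify)
  fix p :: "nat list" and i j :: nat
  assume "set p \<subseteq> {1,2,3}" "i \<in> {1,2,3}" "j \<in> {1,2,3}" "i \<noteq> j"
  then have "p @ [i] \<in> words (Suc (length p))" and "p @ [j] \<in> words (Suc (length p))"
    by (auto simp: words_def)
  moreover have "(\<lambda>u. psiw u ` S) ` words (Suc (length p)) \<subseteq> sets M"
    using cell_in_borelS assms(2) by (auto simp: words_def)
  moreover have "(\<Sum>u\<in>words (Suc (length p)). measure M (psiw u ` S))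
      \<le> measure M (\<Union>u\<in>words (Suc (length p)). psiw u ` S)"
    using additive Union_cells_words by simp
  ultimately show "psiw (p @ [i]) ` S \<inter> psiw (p @ [j]) ` S \<in> null_sets M"
    using finite_measure.Int_null_if_sum_measure_le[OF assms(1) finite_words] \<open>i \<noteq> j\<close>
    by blast
qed

text \<open>Removing the overlaps makes any two cells nested or disjoint; the Borel subsets of the
  overlaps are added to keep the family closed under intersection.\<close>

definition reduced_cells :: "pt set set" where
  "reduced_cells = {psiw u ` S - overlaps | u. set u \<subseteq> {1,2,3}} \<union> {B \<in> borelS S. B \<subseteq> overlaps}"

lemma reduced_cells_subset_borelS: "reduced_cells \<subseteq> borelS S"
  unfolding reduced_cells_def using cell_in_borelS overlaps_in_borelS by auto

lemma Int_stable_reduced_cells: "Int_stable reduced_cells"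
proof (rule Int_stableI)
  fix X Y assume X: "X \<in> reduced_cells" and Y: "Y \<in> reduced_cells"
  show "X \<inter> Y \<in> reduced_cells"
  proof (cases "X \<subseteq> overlaps \<or> Y \<subseteq> overlaps")
    case True
    moreover have "X \<inter> Y \<in> borelS S"
      using X Y reduced_cells_subset_borelS by auto
    ultimately show ?thesis
      unfolding reduced_cells_def by auto
  next
    case False
    then obtain u u' where "set u \<subseteq> {1,2,3}" "X = psiw u ` S - overlaps"
      and "set u' \<subseteq> {1,2,3}" "Y = psiw u' ` S - overlaps"
      using X Y unfolding reduced_cells_def by blast
    then have "X \<inter> Y = X \<or> X \<inter> Y = Y \<or> X \<inter> Y = {}"
      using cells_nested_or_overlap by blast
    moreover have "{} \<in> reduced_cells"
      unfolding reduced_cells_def by auto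
    ultimately show ?thesis
      using X Y by auto
  qed
qed

lemma sigma_sets_reduced_cells: "sigma_sets S reduced_cells = borelS S"
proof
  show "sigma_sets S reduced_cells \<subseteq> borelS S"
    using reduced_cells_subset_borelS
    by (rule sigma_algebra.sigma_sets_subset[OF sigma_algebra_borelS])
  have "reduced_cells \<subseteq> Pow S"
    using reduced_cells_subset_borelS borelS_subset_Pow by blast
  then interpret reduced: sigma_algebra S "sigma_sets S reduced_cells"
    by (rule sigma_algebra_sigma_sets)
  have "psiw u ` S \<in> sigma_sets S reduced_cells" if "set u \<subseteq> {1,2,3}" for u
  proof -
    have "psiw u ` S - overlaps \<in> reduced_cells" and "psiw u ` S \<inter> overlaps \<in> reduced_cells"
      using that cell_in_borelS overlaps_in_borelS unfolding reduced_cells_def by auto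
    then have "(psiw u ` S - overlaps) \<union> (psiw u ` S \<inter> overlaps) \<in> sigma_sets S reduced_cells"
      by blast
    then show ?thesis
      by (simp add: Un_Diff_Int)
  qed
  then have "sigma_sets S {psiw u ` S | u. set u \<subseteq> {1,2,3}} \<subseteq> sigma_sets S reduced_cells"
    by (intro reduced.sigma_sets_subset) auto
  then show "borelS S \<subseteq> sigma_sets S reduced_cells"
    unfolding sigma_sets_cells .
qed

lemma measure_eqI_cells:
  assumes M1: "finite_measure M1" and M2: "finite_measure M2"
    and sets: "sets M1 = borelS S" "sets M2 = borelS S"
    and cells: "\<And>u. set u \<subseteq> {1,2,3} \<Longrightarrow> measure M1 (psiw u ` S) = measure M2 (psiw u ` S)"
    and additive: "\<And>l. (\<Sum>u\<in>words l. measure M1 (psiw u ` S)) = measure M1 S"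
  shows "M1 = M2"
proof -
  have "(\<Sum>u\<in>words l. measure M2 (psiw u ` S)) = measure M2 S" for l
    using additive[of l] cells[of "[]"] cells by (simp add: words_def)
  then have null: "overlaps \<in> null_sets M1" "overlaps \<in> null_sets M2"
    using overlaps_null[OF M1 sets(1) additive] overlaps_null[OF M2 sets(2)] by blast+
  have agree: "emeasure M1 X = emeasure M2 X" if X: "X \<in> reduced_cells" for X
  proof (cases "X \<subseteq> overlaps")
    case True
    then have "X \<in> null_sets M1" and "X \<in> null_sets M2"
      using X null reduced_cells_subset_borelS sets null_sets_subset by blast+
    then show ?thesis
      by (simp add: null_setsD1)
  next
    case False
    then obtain u where u: "set u \<subseteq> {1,2,3}" and "X = psiw u ` S - overlaps"
      using X unfolding reduced_cells_def by blast
    then have "emeasure M1 X = emeasure M1 (psiw u ` S)"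
      and "emeasure M2 X = emeasure M2 (psiw u ` S)"
      using null cell_in_borelS[OF u] sets by (simp_all add: emeasure_Diff_null_set)
    then show ?thesis
      using cells[OF u]
      by (simp add: finite_measure.emeasure_eq_measure[OF M1]
          finite_measure.emeasure_eq_measure[OF M2])
  qed
  show ?thesis
  proof (rule measure_eqI_generator_eq_countable[OF Int_stable_reduced_cells _ agree])
    show "reduced_cells \<subseteq> Pow S"
      using reduced_cells_subset_borelS borelS_subset_Pow by blast
    show "sets M1 = sigma_sets S reduced_cells" and "sets M2 = sigma_sets S reduced_cells"
      using sets sigma_sets_reduced_cells by simp_all
    show "{S - overlaps, overlaps} \<subseteq> reduced_cells"
      using overlaps_in_borelS unfolding reduced_cells_def by (auto intro!: exI[of _ "[]"])
    show "\<Union>{S - overlaps, overlaps} = S"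
      using overlaps_in_borelS borelS_subset_Pow by blast
    show "emeasure M1 A \<noteq> \<infinity>" for A
      using finite_measure.emeasure_finite[OF M1] by simp
    show "countable {S - overlaps, overlaps}"
      by (rule countable_finite) simp
  qed
qed

section \<open>Push-forward of a Gibbs measure\<close>

lemma matrix_measure_eqI_cells:
  assumes "matrix_measure S \<sigma>1" and "semipos_measure S \<sigma>1"
    and "matrix_measure S \<sigma>2" and "semipos_measure S \<sigma>2"
    and cells: "\<And>u. set u \<subseteq> {1,2,3} \<Longrightarrow> \<sigma>1 (psiw u ` S) = \<sigma>2 (psiw u ` S)"
    and additive: "\<And>l. (\<Sum>u\<in>words l. \<sigma>1 (psiw u ` S)) = \<sigma>1 S"
    and "F \<in> borelS S"
  shows "\<sigma>1 F = \<sigma>2 F"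
proof (rule matrix_measure_eqI[OF assms(1-4) _ \<open>F \<in> borelS S\<close>])
  fix v
  have measure_cell: "measure (qmeas S \<sigma> v) (psiw u ` S) = v \<bullet> (\<sigma> (psiw u ` S) *v v)"
    if "matrix_measure S \<sigma>" "semipos_measure S \<sigma>" "set u \<subseteq> {1,2,3}" for \<sigma> u
    using measure_qmeas[OF that(1,2) cell_in_borelS[OF that(3)]] .
  show "qmeas S \<sigma>1 v = qmeas S \<sigma>2 v"
  proof (rule measure_eqI_cells)
    show "finite_measure (qmeas S \<sigma>1 v)" and "finite_measure (qmeas S \<sigma>2 v)"
      using finite_measure_qmeas assms(1-4) by blast+
    show "measure (qmeas S \<sigma>1 v) (psiw u ` S) = measure (qmeas S \<sigma>2 v) (psiw u ` S)"
      if "set u \<subseteq> {1,2,3}" for u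
      using measure_cell[OF assms(1,2) that] measure_cell[OF assms(3,4) that] cells[OF that] by simp
    show "(\<Sum>u\<in>words l. measure (qmeas S \<sigma>1 v) (psiw u ` S)) = measure (qmeas S \<sigma>1 v) S" for l
    proof -
      have "(\<Sum>u\<in>words l. measure (qmeas S \<sigma>1 v) (psiw u ` S))
          = (\<Sum>u\<in>words l. v \<bullet> (\<sigma>1 (psiw u ` S) *v v))"
        using measure_cell[OF assms(1,2)] by (intro sum.cong) (auto simp: words_def)
      also have "\<dots> = v \<bullet> (\<sigma>1 S *v v)"
        unfolding additive[of l, symmetric]
        by (simp add: linear_sum[OF linear_quadratic_form[of v]] comp_def)
      also have "\<dots> = measure (qmeas S \<sigma>1 v) S"
        using measure_cell[OF assms(1,2), of "[]"] by simp
      finally show ?thesis .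
    qed
  qed simp_all
qed

lemma gibbs_pushforward:
  assumes "matrix_measure S \<tau>" and "semipos_measure S \<tau>" and "0 < \<beta>"
    and gibbs: "\<forall>ws. set ws \<subseteq> {1,2,3} \<longrightarrow>
                  \<tau> (psiw ws ` S) =
                    (1 / \<beta>) ^ length ws *\<^sub>R (Dpsiw ws ** \<tau> S ** transpose (Dpsiw ws))"
    and additive: "\<And>l. (\<Sum>u\<in>words l. \<tau> (psiw u ` S)) = \<tau> S"
    and "set js \<subseteq> {1,2,3}" and "F \<in> borelS S"
  shows "\<tau> (psiw js ` F) = (1 / \<beta>) ^ length js *\<^sub>R (Dpsiw js ** \<tau> F ** transpose (Dpsiw js))"
proof -
  define k D where "k = (1 / \<beta>) ^ length js" and "D = Dpsiw js"
  have "0 \<le> k"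
    using \<open>0 < \<beta>\<close> by (simp add: k_def)
  have "k *\<^sub>R (D ** \<tau> F ** transpose D) = \<tau> (psiw js ` F)"
  proof (rule matrix_measure_eqI_cells
      [of "\<lambda>F. k *\<^sub>R (D ** \<tau> F ** transpose D)" "\<lambda>F. \<tau> (psiw js ` F)"])
    show "matrix_measure S (\<lambda>F. \<tau> (psiw js ` F))" and "semipos_measure S (\<lambda>F. \<tau> (psiw js ` F))"
      using matrix_measure_image semipos_measure_image assms(1,2) inj_psiw
        image_in_borelS[OF assms(6)] by blast+
    show "matrix_measure S (\<lambda>F. k *\<^sub>R (D ** \<tau> F ** transpose D))"
      and "semipos_measure S (\<lambda>F. k *\<^sub>R (D ** \<tau> F ** transpose D))"
      using matrix_measure_sandwich semipos_measure_sandwich assms(1,2) \<open>0 \<le> k\<close> by blast+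
    show "k *\<^sub>R (D ** \<tau> (psiw u ` S) ** transpose D) = \<tau> (psiw js ` psiw u ` S)"
      if "set u \<subseteq> {1,2,3}" for u
      using gibbs that \<open>set js \<subseteq> {1,2,3}\<close>
      by (simp add: k_def D_def image_comp psiw_append[symmetric] Dpsiw_append power_add
          matrix_transpose_mul matrix_mul_assoc matrix_scalar_ac scalar_matrix_assoc)
    show "(\<Sum>u\<in>words l. k *\<^sub>R (D ** \<tau> (psiw u ` S) ** transpose D)) = k *\<^sub>R (D ** \<tau> S ** transpose D)"
      for l
      unfolding additive[of l, symmetric]
      by (simp add: linear_sum[OF linear_sandwich[of D "transpose D"]] scaleR_sum_right comp_def)
  qed fact
  then show ?thesis
    by (simp add: k_def D_def)
qed

end

theorem lemma2p2:
  fixes S :: "(real^2) set" and \<tau> :: "(real^2) set \<Rightarrow> real^2^2" and \<beta> :: real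
    and js :: "nat list"
  assumes S_compact: "compact S" and S_ne: "S \<noteq> {}"
    and S_attr: "S = (\<Union>i\<in>{1,2,3}. psi i ` S)"
    and beta_pos: "\<beta> > 0"
    and beta_eig: "\<forall>x\<in>S. Lop (\<lambda>_. mat 1) x = \<beta> *\<^sub>R mat 1"
    and tau_meas: "matrix_measure S \<tau>"
    and tau_semipos: "semipos_measure S \<tau>"
    and tau_norm: "trace (\<tau> S) = 1"
    and tau_eig: "\<forall>A. continuous_on S A \<longrightarrow> (\<forall>x\<in>S. symmetric_mat (A x)) \<longrightarrow>
                     HSint S \<tau> (Lop A) = \<beta> * HSint S \<tau> A"
    and tau_S_id: "\<exists>c>0. \<tau> S = c *\<^sub>R mat 1"
    and tau_gibbs: "\<forall>ws. set ws \<subseteq> {1,2,3} \<longrightarrow>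
                     \<tau> (psiw ws ` S) = (1 / \<beta>) ^ length ws *\<^sub>R
                        (Dpsiw ws ** \<tau> S ** transpose (Dpsiw ws))"
    and js_len: "length js \<ge> 1" and js_set: "set js \<subseteq> {1,2,3}"
  shows "\<forall>E\<in>sets borel.
           \<tau> (psiw js -` E \<inter> S) =
             \<beta> ^ length js *\<^sub>R (matrix_inv (Dpsiw js) ** \<tau> (E \<inter> psiw js ` S)
                                  ** transpose (matrix_inv (Dpsiw js)))"
proof (intro ballI)
  fix E :: "pt set"
  assume "E \<in> sets borel"
  interpret psi_attractor S
    using S_compact S_attr by unfold_locales
  obtain x0 where "x0 \<in> S"
    using S_ne by blast
  then have sum_Tm_squared: "(\<Sum>i\<in>{1,2,3}. Tm i ** Tm i) = \<beta> *\<^sub>R mat 1"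
    using beta_eig unfolding Lop_def by (auto simp: Tm_symmetric)
  obtain c where "\<tau> S = c *\<^sub>R mat 1"
    using tau_S_id by blast
  have additive: "(\<Sum>u\<in>words l. \<tau> (psiw u ` S)) = \<tau> S" for l
    using sum_words_gibbs[OF sum_Tm_squared _ \<open>\<tau> S = c *\<^sub>R mat 1\<close> tau_gibbs] beta_pos by simp
  define F where "F = psiw js -` E \<inter> S"
  have "F \<in> borelS S"
    using measurable_sets_borel
      [OF borel_measurable_continuous_onI[OF continuous_on_psiw] \<open>E \<in> sets borel\<close>]
    unfolding F_def sets_restrict_space by blast
  moreover have "psiw js ` F = E \<inter> psiw js ` S"
    unfolding F_def by auto
  ultimately have pushforward:
      "\<tau> (E \<inter> psiw js ` S) = (1 / \<beta>) ^ length js *\<^sub>R (Dpsiw js ** \<tau> F ** transpose (Dpsiw js))"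
    using gibbs_pushforward[OF tau_meas tau_semipos beta_pos tau_gibbs additive js_set] by metis
  show "\<tau> (psiw js -` E \<inter> S) = \<beta> ^ length js *\<^sub>R
      (matrix_inv (Dpsiw js) ** \<tau> (E \<inter> psiw js ` S) ** transpose (matrix_inv (Dpsiw js)))"
    using sandwich_solve[OF invertible_Dpsiw _ pushforward] beta_pos unfolding F_def
    by (simp add: power_one_over)
qed

end
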